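(* Let $r\ge 2$, $d\ge 2$. Let $\Delta\subset\mathbb{R}^d$ be a regular simplex with vertices $v_1,\ldots,v_{d+1}$, and let $B$ be the closed Euclidean unit ball centred at the origin. Then for all sufficiently small $\varepsilon>0$ the following holds. Let $U_1\subset v_1+\varepsilon B$ be a set of $r$ points and, for $h\in\{2,\ldots,d+1\}$, let $U_h\subset v_h+\varepsilon B$ be a set of $r-1$ points, chosen so that the coordinates of the points of $A=\bigcup_{h=1}^{d+1}U_h$ are algebraically independent (so $|A|=(r-1)(d+1)+1$), and let $M=U_1$. Then $\operatorname{conv}M\cap\operatorname{conv}(A\setminus M)=\emptyset$, $|M|=r$, and there is no proper partition $\{A_1,\ldots,A_r\}$ of $A$ for which the solution $(z,\alpha)$ of \[ z=\sum_{x\in A_j}\alpha(x)\,x \quad\text{and}\quad 1=\sum_{x\in A_j}\alpha(x)\qquad\text{for all } j\in[r] \] satisfies $\alpha(x)<0$ for all $x\in M$ and $\alpha(x)>0$ for all $x\in A\setminus M$.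
   Context: A partition $\{A_1,\ldots,A_r\}$ of $A$ into $r$ parts is called proper if $1\le |A_j|\le d+1$ for every $j$. *)

theory Defs
  imports "HOL-Analysis.Analysis"
begin

text \<open>Algebraic independence over the rationals of a finite family of reals
  c indexed by I: no nonzero polynomial with rational coefficients (monomials
  given by exponent vectors supported in I) vanishes at c.\<close>
definition alg_indep :: "'i set \<Rightarrow> ('i \<Rightarrow> real) \<Rightarrow> bool" where
  "alg_indep I c \<longleftrightarrow>
     (\<forall>(S :: ('i \<Rightarrow> nat) set) (p :: ('i \<Rightarrow> nat) \<Rightarrow> real).
        finite S \<and> S \<subseteq> {m. \<forall>i. i \<notin> I \<longrightarrow> m i = 0} \<and> (\<forall>m\<in>S. p m \<in> \<rat>) \<and>
        (\<Sum>m\<in>S. p m * (\<Prod>i\<in>I. c i ^ m i)) = 0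
        \<longrightarrow> (\<forall>m\<in>S. p m = 0))"

definition coords_alg_indep :: "(real ^ 'n) set \<Rightarrow> bool" where
  "coords_alg_indep A \<longleftrightarrow> alg_indep (A \<times> (UNIV :: 'n set)) (\<lambda>(x, i). x $ i)"

definition regular_simplex :: "(nat \<Rightarrow> real ^ 'n) \<Rightarrow> bool" where
  "regular_simplex v \<longleftrightarrow>
     (\<exists>s>0. \<forall>i\<in>{1..CARD('n)+1}. \<forall>j\<in>{1..CARD('n)+1}. i \<noteq> j \<longrightarrow> dist (v i) (v j) = s)"

definition proper_partition :: "nat \<Rightarrow> (real ^ 'n) set \<Rightarrow> (nat \<Rightarrow> (real ^ 'n) set) \<Rightarrow> bool" where
  "proper_partition r A P \<longleftrightarrow>
     (\<Union>j\<in>{1..r}. P j) = A \<and>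
     (\<forall>j\<in>{1..r}. \<forall>k\<in>{1..r}. j \<noteq> k \<longrightarrow> P j \<inter> P k = {}) \<and>
     (\<forall>j\<in>{1..r}. finite (P j) \<and> 1 \<le> card (P j) \<and> card (P j) \<le> CARD('n) + 1)"

end

theory Submission
  imports Defs
begin

(*
  Let \<phi>_1, ..., \<phi>_(d+1) be the barycentric coordinates of the simplex. For small \<epsilon>,
  \<phi>_h is within c = O(\<epsilon>) of the Kronecker delta \<delta>_hk on U_k. The affine function \<phi>_1
  is at least 1 - c on M = U_1 and at most c on A - M, which separates the two convex hulls.

  Suppose (z, \<alpha>) solves the system for a partition into r parts. Each U_h with h \<ge> 2 has
  only r - 1 points, so some part P_j misses it, and then \<phi>_h(z) = \<Sum>_{P_j} \<alpha> \<phi>_h \<le> c T_j,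
  where T_j = \<Sum>_{P_j} |\<alpha>|. In every part the negative weights sit on M, where \<phi>_1 \<approx> 1, so
  \<phi>_1(z) \<le> 1/2 - (1/2 - c) T_j; hence every T_j is at most 4 (1/2 - \<phi>_1(z)). Summing,
  1 = \<phi>_1(z) + \<Sum>_{h\<ge>2} \<phi>_h(z) \<le> 1/2 - X + 4 c d X with X = 1/2 - \<phi>_1(z) \<ge> 0,
  which is impossible once 8 c d \<le> 1.
*)

definition preserves_affine_combinations :: "('a::real_vector \<Rightarrow> real) \<Rightarrow> bool" where
  "preserves_affine_combinations f \<longleftrightarrow>
     (\<forall>P \<alpha>. finite P \<and> (\<Sum>x\<in>P. \<alpha> x) = 1 \<longrightarrow> f (\<Sum>x\<in>P. \<alpha> x *\<^sub>R x) = (\<Sum>x\<in>P. \<alpha> x * f x))"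

lemma preserves_affine_combinations_inner:
  "preserves_affine_combinations (\<lambda>x. inner g x + b)"
  unfolding preserves_affine_combinations_def
  by (simp add: distrib_left sum.distrib inner_sum_right flip: sum_distrib_right)

lemma preserves_affine_combinations_convex_hull_lower:
  assumes "preserves_affine_combinations f" "finite S" "\<And>x. x \<in> S \<Longrightarrow> t \<le> f x"
    and "y \<in> convex hull S"
  shows "t \<le> f y"
proof -
  obtain u where u: "\<forall>x\<in>S. 0 \<le> u x" "sum u S = 1" and y: "y = (\<Sum>x\<in>S. u x *\<^sub>R x)"
    using assms(4) convex_hull_finite[OF assms(2)] by auto
  have "t = (\<Sum>x\<in>S. u x * t)" using u by (simp flip: sum_distrib_right)
  also have "\<dots> \<le> (\<Sum>x\<in>S. u x * f x)" by (rule sum_mono) (use u assms(3) in \<open>auto intro: mult_left_mono\<close>)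
  also have "\<dots> = f y" using assms(1) assms(2) u y unfolding preserves_affine_combinations_def by auto
  finally show ?thesis .
qed

lemma convex_hulls_disjoint_by_affine_function:
  assumes f: "preserves_affine_combinations f" and "finite S" "finite T" "t < s"
    and "\<And>x. x \<in> S \<Longrightarrow> s \<le> f x" and "\<And>x. x \<in> T \<Longrightarrow> f x \<le> t"
  shows "convex hull S \<inter> convex hull T = {}"
proof -
  have neg_f: "preserves_affine_combinations (\<lambda>x. - f x)"
    using f unfolding preserves_affine_combinations_def by (simp add: sum_negf)
  have "- t \<le> - f y" if "y \<in> convex hull T" for y
    by (rule preserves_affine_combinations_convex_hull_lower[OF neg_f assms(3) _ that])
      (simp add: assms(6))
  moreover have "s \<le> f y" if "y \<in> convex hull S" for y
    by (rule preserves_affine_combinations_convex_hull_lower[OF f assms(2) assms(5) that])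
  ultimately show ?thesis using \<open>t < s\<close> by force
qed

lemma regular_simplex_dual_vectors:
  fixes v :: "nat \<Rightarrow> 'a::real_inner"
  assumes s: "s > 0" and dv: "\<forall>i\<in>{1..d+1}. \<forall>j\<in>{1..d+1}. i \<noteq> j \<longrightarrow> dist (v i) (v j) = s"
  obtains g where "\<And>h m. h \<in> {2..d+1} \<Longrightarrow> m \<in> {1..d+1} \<Longrightarrow>
      inner (v m - v 1) (g h) = (if m = h then 1 else 0)"
    and "\<And>h. h \<in> {2..d+1} \<Longrightarrow> norm (g h) \<le> 4 / s"
proof -
  define \<sigma> where "\<sigma> = (\<Sum>k\<in>{2..d+1}. v k - v 1)"
  \<comment> \<open>The Gram matrix of the edges at v 1 is s^2/2 (I + J), whose inverse is 2/s^2 (I - J/(d+1)).\<close>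
  define g where "g h = (2/s\<^sup>2) *\<^sub>R ((v h - v 1) - (1 / real (d+1)) *\<^sub>R \<sigma>)" for h
  have edge_norm: "norm (v h - v 1) = s" if "h \<in> {2..d+1}" for h
    using dv that by (auto simp: dist_norm)
  have edge_inner: "inner (v h - v 1) (v k - v 1) = (if h = k then s\<^sup>2 else s\<^sup>2/2)"
    if "h \<in> {2..d+1}" "k \<in> {2..d+1}" for h k
  proof (cases "h = k")
    case True
    then show ?thesis using edge_norm[OF that(1)] by (simp add: power2_norm_eq_inner[symmetric])
  next
    case False
    have "norm ((v h - v 1) - (v k - v 1)) = s" using dv that False by (auto simp: dist_norm)
    then show ?thesis using False edge_norm[OF that(1)] edge_norm[OF that(2)] by (simp add: dot_norm_neg)
  qed
  have inner_\<sigma>: "inner (v m - v 1) \<sigma> = real (d+1) * s\<^sup>2 / 2" if m: "m \<in> {2..d+1}" for m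
  proof -
    have "inner (v m - v 1) \<sigma> = (\<Sum>k\<in>{2..d+1}. s\<^sup>2/2 + (if m = k then s\<^sup>2/2 else 0))"
      unfolding \<sigma>_def inner_sum_right by (rule sum.cong) (use edge_inner m in auto)
    also have "\<dots> = real d * s\<^sup>2/2 + s\<^sup>2/2" using m by (simp add: sum.distrib)
    finally show ?thesis by (simp add: algebra_simps)
  qed
  show ?thesis
  proof
    fix h m assume h: "h \<in> {2..d+1}" and m: "m \<in> {1..d+1}"
    show "inner (v m - v 1) (g h) = (if m = h then 1 else 0)"
    proof (cases "m = 1")
      case False
      then have m2: "m \<in> {2..d+1}" using m by auto
      have "inner (v m - v 1) \<sigma> / real (d+1) = s\<^sup>2/2" using inner_\<sigma>[OF m2] by (simp add: field_simps)
      then have "inner (v m - v 1) (g h) = (2/s\<^sup>2) * ((if m = h then s\<^sup>2 else s\<^sup>2/2) - s\<^sup>2/2)"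
        using edge_inner[OF m2 h] unfolding g_def by (simp add: inner_diff_right mult.commute)
      then show ?thesis using s by auto
    qed (use h in auto)
  next
    fix h assume h: "h \<in> {2..d+1}"
    have "norm \<sigma> \<le> (\<Sum>k\<in>{2..d+1}. norm (v k - v 1))" unfolding \<sigma>_def by (rule norm_sum)
    also have "\<dots> = real d * s" using edge_norm by simp
    finally have "norm ((1 / real (d+1)) *\<^sub>R \<sigma>) \<le> s"
      using s by (simp add: field_simps)
    then have "norm ((v h - v 1) - (1 / real (d+1)) *\<^sub>R \<sigma>) \<le> 2 * s"
      using norm_triangle_ineq4[of "v h - v 1" "(1 / real (d+1)) *\<^sub>R \<sigma>"] edge_norm[OF h] by linarith
    then have "norm (g h) \<le> (2/s\<^sup>2) * (2 * s)"
      unfolding g_def using s by (simp add: divide_right_mono)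
    also have "\<dots> = 4 / s" using s by (simp add: power2_eq_square field_simps)
    finally show "norm (g h) \<le> 4 / s" .
  qed
qed

lemma sum_atLeast_1_split:
  fixes n :: nat
  shows "(\<Sum>h\<in>{1..n+1}. f h) = f 1 + (\<Sum>h\<in>{2..n+1}. f h)"
  by (rule sum.atLeast_Suc_atMost[of 1 "n+1" f, unfolded Suc_1]) simp

lemma regular_simplex_barycentric_coordinates:
  fixes v :: "nat \<Rightarrow> 'a::real_inner"
  assumes s: "s > 0" and dv: "\<forall>i\<in>{1..d+1}. \<forall>j\<in>{1..d+1}. i \<noteq> j \<longrightarrow> dist (v i) (v j) = s"
  obtains \<phi> :: "nat \<Rightarrow> 'a \<Rightarrow> real"
  where "\<And>h. preserves_affine_combinations (\<phi> h)"
    and "\<And>x. (\<Sum>h\<in>{1..d+1}. \<phi> h x) = 1"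
    and "\<And>h k. h \<in> {1..d+1} \<Longrightarrow> k \<in> {1..d+1} \<Longrightarrow> \<phi> h (v k) = (if h = k then 1 else 0)"
    and "\<And>h x y. h \<in> {1..d+1} \<Longrightarrow> \<bar>\<phi> h x - \<phi> h y\<bar> \<le> 4 * real d / s * dist x y"
proof -
  obtain g where g_dual: "\<And>h m. h \<in> {2..d+1} \<Longrightarrow> m \<in> {1..d+1} \<Longrightarrow>
      inner (v m - v 1) (g h) = (if m = h then 1 else 0)"
    and g_norm: "\<And>h. h \<in> {2..d+1} \<Longrightarrow> norm (g h) \<le> 4 / s"
    using regular_simplex_dual_vectors[OF s dv] by blast
  define G where "G h = (if h = 1 then - (\<Sum>k\<in>{2..d+1}. g k) else g h)" for h
  define \<phi> where "\<phi> h x = inner (G h) (x - v 1) + (if h = 1 then 1 else 0)" for h x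
  show ?thesis
  proof
    show "preserves_affine_combinations (\<phi> h)" for h
      using preserves_affine_combinations_inner[of "G h" "(if h = 1 then 1 else 0) - inner (G h) (v 1)"]
      unfolding \<phi>_def by (simp add: inner_diff_right algebra_simps)
    show "(\<Sum>h\<in>{1..d+1}. \<phi> h x) = 1" for x
      unfolding sum_atLeast_1_split \<phi>_def G_def by (simp add: inner_sum_left[symmetric])
    show "\<phi> h (v k) = (if h = k then 1 else 0)" if h: "h \<in> {1..d+1}" and k: "k \<in> {1..d+1}" for h k
    proof (cases "h = 1")
      case True
      have "(\<Sum>j\<in>{2..d+1}. inner (g j) (v k - v 1)) = (if k = 1 then 0 else 1)"
        using k g_dual by (simp add: inner_commute)
      then show ?thesis using True k by (auto simp: \<phi>_def G_def inner_sum_left inner_add_left split: if_splits)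
    qed (use h k g_dual in \<open>auto simp: \<phi>_def G_def inner_commute\<close>)
    show "\<bar>\<phi> h x - \<phi> h y\<bar> \<le> 4 * real d / s * dist x y" if h: "h \<in> {1..d+1}" for h x y
    proof -
      have "norm (G h) \<le> 4 * real d / s"
      proof (cases "h = 1")
        case True
        have "norm (G h) = norm (\<Sum>k\<in>{2..d+1}. g k)"
          unfolding G_def True by (simp only: if_P[OF refl] norm_minus_cancel)
        also have "\<dots> \<le> (\<Sum>k\<in>{2..d+1}. norm (g k))" by (rule norm_sum)
        also have "\<dots> \<le> (\<Sum>k\<in>{2..d+1}. 4 / s)" using g_norm by (rule sum_mono)
        also have "\<dots> = 4 * real d / s" by simp
        finally show ?thesis .
      next
        case False
        then have h2: "h \<in> {2..d+1}" using h by auto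
        then have "4 / s \<le> 4 * real d / s" using s by (simp add: divide_right_mono)
        then show ?thesis using False g_norm[OF h2] by (simp add: G_def)
      qed
      moreover have "\<bar>\<phi> h x - \<phi> h y\<bar> \<le> norm (G h) * dist x y"
        using Cauchy_Schwarz_ineq2[of "G h" "x - y"] by (simp add: \<phi>_def dist_norm inner_diff_right)
      ultimately show ?thesis by (meson order_trans mult_right_mono zero_le_dist)
    qed
  qed
qed

lemma regular_simplex_coordinates_near_vertices:
  fixes v :: "nat \<Rightarrow> 'a::real_inner"
  assumes d: "1 \<le> d" and s: "s > 0"
    and dv: "\<forall>i\<in>{1..d+1}. \<forall>j\<in>{1..d+1}. i \<noteq> j \<longrightarrow> dist (v i) (v j) = s"
  obtains \<phi> :: "nat \<Rightarrow> 'a \<Rightarrow> real" and \<epsilon>0 :: real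
  where "0 < \<epsilon>0" and "\<And>h. preserves_affine_combinations (\<phi> h)"
    and "\<And>x. (\<Sum>h\<in>{1..d+1}. \<phi> h x) = 1"
    and "\<And>\<epsilon>. 0 < \<epsilon> \<Longrightarrow> \<epsilon> < \<epsilon>0 \<Longrightarrow> \<exists>c::real. 0 \<le> c \<and> 8 * c * real d \<le> 1 \<and> c \<le> 1/4 \<and>
      (\<forall>h\<in>{1..d+1}. \<forall>k\<in>{1..d+1}. \<forall>x. dist x (v k) \<le> \<epsilon> \<longrightarrow> \<bar>\<phi> h x - (if h = k then 1 else 0)\<bar> \<le> c)"
proof -
  obtain \<phi> :: "nat \<Rightarrow> 'a \<Rightarrow> real" where \<phi>_affine: "\<And>h. preserves_affine_combinations (\<phi> h)"
    and \<phi>_sum: "\<And>x. (\<Sum>h\<in>{1..d+1}. \<phi> h x) = 1"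
    and \<phi>_vertex: "\<And>h k. h \<in> {1..d+1} \<Longrightarrow> k \<in> {1..d+1} \<Longrightarrow> \<phi> h (v k) = (if h = k then 1 else 0)"
    and \<phi>_lipschitz: "\<And>h x y. h \<in> {1..d+1} \<Longrightarrow> \<bar>\<phi> h x - \<phi> h y\<bar> \<le> 4 * real d / s * dist x y"
    using regular_simplex_barycentric_coordinates[OF s dv] by blast
  show ?thesis
  proof
    show "0 < s / (32 * real d ^ 2)" using s d by simp
    fix \<epsilon> :: real assume \<epsilon>: "0 < \<epsilon>" "\<epsilon> < s / (32 * real d ^ 2)"
    define c where "c = 4 * real d / s * \<epsilon>"
    have "0 \<le> c" using s \<epsilon> by (simp add: c_def)
    have "8 * c * d = \<epsilon> * (32 * real d ^ 2) / s" by (simp add: c_def power2_eq_square)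
    also have "\<dots> \<le> 1" using \<epsilon> s d by (simp add: pos_divide_le_eq pos_less_divide_eq)
    finally have "8 * c * d \<le> 1" .
    moreover have "8 * c * 1 \<le> 8 * c * d" using d \<open>0 \<le> c\<close> by (intro mult_left_mono) auto
    moreover have "\<bar>\<phi> h x - (if h = k then 1 else 0)\<bar> \<le> c"
      if h: "h \<in> {1..d+1}" and k: "k \<in> {1..d+1}" and x: "dist x (v k) \<le> \<epsilon>" for h k x
    proof -
      have "4 * real d / s * dist x (v k) \<le> c" unfolding c_def using s x by (intro mult_left_mono) auto
      then show ?thesis using \<phi>_lipschitz[OF h, of x "v k"] \<phi>_vertex[OF h k] by simp
    qed
    ultimately show "\<exists>c::real. 0 \<le> c \<and> 8 * c * real d \<le> 1 \<and> c \<le> 1/4 \<and>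
      (\<forall>h\<in>{1..d+1}. \<forall>k\<in>{1..d+1}. \<forall>x. dist x (v k) \<le> \<epsilon> \<longrightarrow> \<bar>\<phi> h x - (if h = k then 1 else 0)\<bar> \<le> c)"
      using \<open>0 \<le> c\<close> by (intro exI[of _ c]) auto
  qed (fact \<phi>_affine \<phi>_sum)+
qed

lemma sign_pattern_weighted_sum_le:
  fixes \<alpha> \<phi> :: "'a \<Rightarrow> real"
  assumes "(\<Sum>x\<in>P. \<alpha> x) = 1"
    and "\<And>x. x \<in> P \<Longrightarrow> x \<in> M \<Longrightarrow> \<alpha> x \<le> 0 \<and> 1 - c \<le> \<phi> x"
    and "\<And>x. x \<in> P \<Longrightarrow> x \<notin> M \<Longrightarrow> 0 \<le> \<alpha> x \<and> \<phi> x \<le> c"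
  shows "(\<Sum>x\<in>P. \<alpha> x * \<phi> x) \<le> c * (\<Sum>x\<in>P. \<bar>\<alpha> x\<bar>) + (1 - (\<Sum>x\<in>P. \<bar>\<alpha> x\<bar>)) / 2"
proof -
  have "\<alpha> x * \<phi> x \<le> c * \<bar>\<alpha> x\<bar> + (\<alpha> x - \<bar>\<alpha> x\<bar>) / 2" if "x \<in> P" for x
  proof (cases "x \<in> M")
    case True
    then have "\<alpha> x * \<phi> x \<le> \<alpha> x * (1 - c)" using assms(2) that by (simp add: mult_left_mono_neg)
    then show ?thesis using assms(2) True that by (simp add: algebra_simps)
  next
    case False
    then have "\<alpha> x * \<phi> x \<le> \<alpha> x * c" using assms(3) that by (simp add: mult_left_mono)
    then show ?thesis using assms(3) False that by (simp add: algebra_simps)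
  qed
  then have "(\<Sum>x\<in>P. \<alpha> x * \<phi> x) \<le> (\<Sum>x\<in>P. c * \<bar>\<alpha> x\<bar> + (\<alpha> x - \<bar>\<alpha> x\<bar>) / 2)"
    by (rule sum_mono)
  also have "\<dots> = c * (\<Sum>x\<in>P. \<bar>\<alpha> x\<bar>) + ((\<Sum>x\<in>P. \<alpha> x) - (\<Sum>x\<in>P. \<bar>\<alpha> x\<bar>)) / 2"
    by (simp add: sum.distrib sum_distrib_left sum_subtractf flip: sum_divide_distrib)
  finally show ?thesis using assms(1) by simp
qed

lemma sign_pattern_contradiction:
  fixes \<alpha> \<psi> :: "'a \<Rightarrow> real" and \<phi> :: "'i \<Rightarrow> 'a \<Rightarrow> real" and c :: real
  assumes "finite H" "0 \<le> c" "8 * c * card H \<le> 1" "c \<le> 1/4" "J \<noteq> {}"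
    and parts: "\<And>j. j \<in> J \<Longrightarrow> (\<Sum>x\<in>P j. \<alpha> x) = 1"
    and coord_first: "\<And>j. j \<in> J \<Longrightarrow> (\<Sum>x\<in>P j. \<alpha> x * \<psi> x) = a"
    and coord: "\<And>j h. j \<in> J \<Longrightarrow> h \<in> H \<Longrightarrow> (\<Sum>x\<in>P j. \<alpha> x * \<phi> h x) = w h"
    and w_sum: "a + sum w H = 1"
    and neg: "\<And>j x. j \<in> J \<Longrightarrow> x \<in> P j \<Longrightarrow> x \<in> M \<Longrightarrow> \<alpha> x \<le> 0 \<and> 1 - c \<le> \<psi> x"
    and pos: "\<And>j x. j \<in> J \<Longrightarrow> x \<in> P j \<Longrightarrow> x \<notin> M \<Longrightarrow> 0 \<le> \<alpha> x \<and> \<psi> x \<le> c"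
    and miss: "\<And>h. h \<in> H \<Longrightarrow> \<exists>j\<in>J. \<forall>x\<in>P j. \<bar>\<phi> h x\<bar> \<le> c"
  shows False
proof -
  define T where "T j = (\<Sum>x\<in>P j. \<bar>\<alpha> x\<bar>)" for j
  define X where "X = 1/2 - a"
  have T_nonneg: "0 \<le> T j" for j unfolding T_def by (simp add: sum_nonneg)
  have part_bound: "T j / 2 - c * T j \<le> X" if j: "j \<in> J" for j
  proof -
    have "a \<le> c * T j + (1 - T j) / 2"
      unfolding T_def coord_first[OF j, symmetric]
      by (rule sign_pattern_weighted_sum_le[where M = M]) (use parts[OF j] neg[OF j] pos[OF j] in auto)
    then show ?thesis unfolding X_def by argo
  qed
  have c_T: "c * T j \<le> T j / 4" for j using mult_right_mono[OF \<open>c \<le> 1/4\<close> T_nonneg] by simp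
  have T_le: "T j \<le> 4 * X" if "j \<in> J" for j using part_bound[OF that] c_T[of j] by argo
  obtain j0 where "j0 \<in> J" using \<open>J \<noteq> {}\<close> by blast
  have X_nonneg: "0 \<le> X" using T_le[OF \<open>j0 \<in> J\<close>] T_nonneg[of j0] by argo
  have "w h \<le> c * (4 * X)" if h: "h \<in> H" for h
  proof -
    obtain j where j: "j \<in> J" and small: "\<forall>x\<in>P j. \<bar>\<phi> h x\<bar> \<le> c" using miss h by blast
    have "\<alpha> x * \<phi> h x \<le> \<bar>\<alpha> x\<bar> * c" if "x \<in> P j" for x
    proof -
      have "\<alpha> x * \<phi> h x \<le> \<bar>\<alpha> x\<bar> * \<bar>\<phi> h x\<bar>" by (metis abs_ge_self abs_mult)
      also have "\<dots> \<le> \<bar>\<alpha> x\<bar> * c" using small that by (simp add: mult_left_mono)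
      finally show ?thesis .
    qed
    then have "(\<Sum>x\<in>P j. \<alpha> x * \<phi> h x) \<le> (\<Sum>x\<in>P j. \<bar>\<alpha> x\<bar> * c)" by (rule sum_mono)
    then have "w h \<le> c * T j"
      unfolding coord[OF j h] T_def by (simp add: sum_distrib_left mult.commute)
    also have "\<dots> \<le> c * (4 * X)" using T_le[OF j] \<open>0 \<le> c\<close> by (rule mult_left_mono)
    finally show ?thesis .
  qed
  then have "(\<Sum>h\<in>H. w h) \<le> (\<Sum>h\<in>H. c * (4 * X))" by (rule sum_mono)
  then have "1/2 + X \<le> (\<Sum>h\<in>H. c * (4 * X))"
    using w_sum unfolding X_def by argo
  also have "\<dots> = (8 * c * card H) * (X / 2)" by simp
  also have "\<dots> \<le> 1 * (X / 2)" using assms(3) X_nonneg by (intro mult_right_mono) auto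
  finally show False using X_nonneg by simp
qed

lemma disjoint_family_on_misses_small_set:
  assumes "disjoint_family_on P {1..r}" "finite U" "card U < r"
  shows "\<exists>j\<in>{1..r}. P j \<inter> U = {}"
proof (rule ccontr)
  assume "\<not> ?thesis"
  then have "\<forall>j\<in>{1..r}. \<exists>x. x \<in> P j \<inter> U" by blast
  from bchoice[OF this] obtain sel where sel: "\<forall>j\<in>{1..r}. sel j \<in> P j \<inter> U" ..
  have "inj_on sel {1..r}"
  proof (rule inj_onI, rule ccontr)
    fix j k assume "j \<in> {1..r}" "k \<in> {1..r}" "sel j = sel k" "j \<noteq> k"
    then show False using sel assms(1) unfolding disjoint_family_on_def by (metis IntE disjoint_iff)
  qed
  moreover have "sel ` {1..r} \<subseteq> U" using sel by auto
  ultimately have "card {1..r} \<le> card U" using card_inj_on_le assms(2) by blast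
  then show False using assms(3) by simp
qed

lemma no_sign_pattern_solution_near_vertices:
  fixes \<phi> :: "nat \<Rightarrow> 'a::real_vector \<Rightarrow> real" and U P :: "nat \<Rightarrow> 'a set" and d :: nat
  defines "A \<equiv> \<Union>k\<in>{1..d+1}. U k"
  assumes \<phi>_affine: "\<And>h. preserves_affine_combinations (\<phi> h)"
    and \<phi>_sum: "\<And>x. (\<Sum>h\<in>{1..d+1}. \<phi> h x) = 1"
    and near: "\<And>h k x. h \<in> {1..d+1} \<Longrightarrow> k \<in> {1..d+1} \<Longrightarrow> x \<in> U k \<Longrightarrow>
      \<bar>\<phi> h x - (if h = k then 1 else 0)\<bar> \<le> c"
    and c: "0 \<le> c" "8 * c * d \<le> 1" "c \<le> 1/4"
    and U_small: "\<And>h. h \<in> {2..d+1} \<Longrightarrow> finite (U h) \<and> card (U h) < r"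
    and P: "disjoint_family_on P {1..r}" "\<And>j. j \<in> {1..r} \<Longrightarrow> finite (P j) \<and> P j \<subseteq> A"
    and "1 \<le> r"
    and sol: "\<And>j. j \<in> {1..r} \<Longrightarrow> z = (\<Sum>x\<in>P j. \<alpha> x *\<^sub>R x) \<and> (\<Sum>x\<in>P j. \<alpha> x) = 1"
    and neg: "\<And>x. x \<in> U 1 \<Longrightarrow> \<alpha> x \<le> 0" and pos: "\<And>x. x \<in> A - U 1 \<Longrightarrow> 0 \<le> \<alpha> x"
  shows False
proof (rule sign_pattern_contradiction[where H = "{2..d+1}" and J = "{1..r}" and
      \<psi> = "\<phi> 1" and a = "\<phi> 1 z" and w = "\<lambda>h. \<phi> h z" and M = "U 1" and P = P])
  have coord: "(\<Sum>x\<in>P j. \<alpha> x * \<phi> h x) = \<phi> h z" if "j \<in> {1..r}" for j h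
    using \<phi>_affine[of h] P(2)[OF that] sol[OF that] unfolding preserves_affine_combinations_def by simp
  show "(\<Sum>x\<in>P j. \<alpha> x * \<phi> 1 x) = \<phi> 1 z" if "j \<in> {1..r}" for j
    using coord[OF that] .
  show "(\<Sum>x\<in>P j. \<alpha> x * \<phi> h x) = \<phi> h z" if "j \<in> {1..r}" "h \<in> {2..d+1}" for j h
    using coord[OF that(1)] .
  show "\<phi> 1 z + (\<Sum>h\<in>{2..d+1}. \<phi> h z) = 1"
    using \<phi>_sum[of z] unfolding sum_atLeast_1_split .
  have in_U: "\<exists>k\<in>{1..d+1}. x \<in> U k" if "j \<in> {1..r}" "x \<in> P j" for j x
    using P(2) that unfolding A_def by blast
  show "\<alpha> x \<le> 0 \<and> 1 - c \<le> \<phi> 1 x" if "x \<in> U 1" for x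
    using neg[OF that] near[of 1 1 x] that by auto
  show "0 \<le> \<alpha> x \<and> \<phi> 1 x \<le> c" if j: "j \<in> {1..r}" and x: "x \<in> P j" and not_M: "x \<notin> U 1" for j x
  proof
    show "0 \<le> \<alpha> x" using pos P(2)[OF j] x not_M by blast
    obtain k where "k \<in> {1..d+1}" "x \<in> U k" using in_U j x by blast
    then show "\<phi> 1 x \<le> c" using near[of 1 k x] not_M by (cases "k = 1") auto
  qed
  show "\<exists>j\<in>{1..r}. \<forall>x\<in>P j. \<bar>\<phi> h x\<bar> \<le> c" if h: "h \<in> {2..d+1}" for h
  proof -
    obtain j where j: "j \<in> {1..r}" and miss: "P j \<inter> U h = {}"
      using disjoint_family_on_misses_small_set[OF P(1)] U_small[OF h] by blast
    have "\<bar>\<phi> h x\<bar> \<le> c" if x: "x \<in> P j" for x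
    proof -
      obtain k where k: "k \<in> {1..d+1}" "x \<in> U k" using in_U j x by blast
      then have "k \<noteq> h" using miss x by blast
      then show ?thesis using near[of h k x] h k by simp
    qed
    then show ?thesis using j by blast
  qed
  show "(\<Sum>x\<in>P j. \<alpha> x) = 1" if "j \<in> {1..r}" for j
    using sol[OF that] by blast
  show "8 * c * real (card {2..d+1}) \<le> 1" using c(2) by simp
  show "{1..r} \<noteq> {}" using \<open>1 \<le> r\<close> by simp
  show "finite {2..d+1}" "0 \<le> c" "c \<le> 1/4" using c by simp_all
qed

lemma near_first_vertex_convex_hulls_disjoint:
  fixes \<phi> :: "nat \<Rightarrow> 'a::real_vector \<Rightarrow> real" and U :: "nat \<Rightarrow> 'a set" and d :: nat
  defines "A \<equiv> \<Union>k\<in>{1..d+1}. U k"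
  assumes \<phi>_affine: "\<And>h. preserves_affine_combinations (\<phi> h)"
    and near: "\<And>h k x. h \<in> {1..d+1} \<Longrightarrow> k \<in> {1..d+1} \<Longrightarrow> x \<in> U k \<Longrightarrow>
      \<bar>\<phi> h x - (if h = k then 1 else 0)\<bar> \<le> c"
    and "c < 1/2" and fin: "\<And>k. k \<in> {1..d+1} \<Longrightarrow> finite (U k)"
  shows "convex hull (U 1) \<inter> convex hull (A - U 1) = {}"
proof (rule convex_hulls_disjoint_by_affine_function[OF \<phi>_affine])
  show "finite (U 1)" "finite (A - U 1)" using fin unfolding A_def by auto
  show "1 - c \<le> \<phi> 1 x" if "x \<in> U 1" for x using near[of 1 1 x] that by auto
  show "\<phi> 1 x \<le> c" if x: "x \<in> A - U 1" for x
  proof -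
    obtain k where "k \<in> {1..d+1}" "x \<in> U k" "k \<noteq> 1" using x unfolding A_def by blast
    then show ?thesis using near[of 1 k x] by auto
  qed
qed (use \<open>c < 1/2\<close> in simp)

lemma proper_partition_disjoint_family_on:
  assumes "proper_partition r A P"
  shows "disjoint_family_on P {1..r}" and "\<And>j. j \<in> {1..r} \<Longrightarrow> finite (P j) \<and> P j \<subseteq> A"
  using assms unfolding proper_partition_def disjoint_family_on_def by blast+

lemma proper_partition_no_sign_pattern_solution:
  fixes \<phi> :: "nat \<Rightarrow> real ^ 'n \<Rightarrow> real" and U :: "nat \<Rightarrow> (real ^ 'n) set" and d :: nat
  defines "A \<equiv> \<Union>k\<in>{1..d+1}. U k"
  assumes \<phi>_affine: "\<And>h. preserves_affine_combinations (\<phi> h)"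
    and \<phi>_sum: "\<And>x. (\<Sum>h\<in>{1..d+1}. \<phi> h x) = 1"
    and near: "\<And>h k x. h \<in> {1..d+1} \<Longrightarrow> k \<in> {1..d+1} \<Longrightarrow> x \<in> U k \<Longrightarrow>
      \<bar>\<phi> h x - (if h = k then 1 else 0)\<bar> \<le> c"
    and c: "0 \<le> c" "8 * c * d \<le> 1" "c \<le> 1/4"
    and U_small: "\<And>h. h \<in> {2..d+1} \<Longrightarrow> finite (U h) \<and> card (U h) < r"
    and "1 \<le> r"
  shows "\<not> (\<exists>P. proper_partition r A P \<and>
               (\<exists>(z :: real ^ 'n) (\<alpha> :: real ^ 'n \<Rightarrow> real).
                  (\<forall>j\<in>{1..r}. z = (\<Sum>x\<in>P j. \<alpha> x *\<^sub>R x) \<and> (\<Sum>x\<in>P j. \<alpha> x) = 1) \<and>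
                  (\<forall>x\<in>U 1. \<alpha> x < 0) \<and> (\<forall>x\<in>A - U 1. \<alpha> x > 0)))"
proof (intro notI, elim exE conjE)
  fix P z \<alpha> assume part: "proper_partition r A P"
    and sol: "\<forall>j\<in>{1..r}. z = (\<Sum>x\<in>P j. \<alpha> x *\<^sub>R x) \<and> (\<Sum>x\<in>P j. \<alpha> x) = 1"
    and neg: "\<forall>x\<in>U 1. \<alpha> x < 0" and pos: "\<forall>x\<in>A - U 1. 0 < \<alpha> x"
  show False
  proof (rule no_sign_pattern_solution_near_vertices[OF \<phi>_affine \<phi>_sum near c U_small
        proper_partition_disjoint_family_on[OF part[unfolded A_def]] \<open>1 \<le> r\<close>])
    show "z = (\<Sum>x\<in>P j. \<alpha> x *\<^sub>R x) \<and> (\<Sum>x\<in>P j. \<alpha> x) = 1" if "j \<in> {1..r}" for j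
      using sol that by blast
  qed (use neg pos in \<open>simp_all add: less_imp_le A_def\<close>)
qed

theorem mainTheorem8:
  fixes r :: nat and v :: "nat \<Rightarrow> real ^ 'n"
  assumes "r \<ge> 2" and "CARD('n) \<ge> 2"
    and "regular_simplex v"
  shows "\<exists>\<epsilon>0>0. \<forall>\<epsilon>. 0 < \<epsilon> \<and> \<epsilon> < \<epsilon>0 \<longrightarrow>
    (\<forall>U :: nat \<Rightarrow> (real ^ 'n) set.
       (\<forall>h\<in>{1..CARD('n)+1}. finite (U h) \<and> U h \<subseteq> cball (v h) \<epsilon>) \<and>
       card (U 1) = r \<and> (\<forall>h\<in>{2..CARD('n)+1}. card (U h) = r - 1) \<and>
       coords_alg_indep (\<Union>h\<in>{1..CARD('n)+1}. U h)
       \<longrightarrow>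
       (let A = (\<Union>h\<in>{1..CARD('n)+1}. U h); M = U 1 in
          convex hull M \<inter> convex hull (A - M) = {} \<and> card M = r \<and>
          \<not> (\<exists>P. proper_partition r A P \<and>
               (\<exists>(z :: real ^ 'n) (\<alpha> :: real ^ 'n \<Rightarrow> real).
                  (\<forall>j\<in>{1..r}. z = (\<Sum>x\<in>P j. \<alpha> x *\<^sub>R x) \<and> (\<Sum>x\<in>P j. \<alpha> x) = 1) \<and>
                  (\<forall>x\<in>M. \<alpha> x < 0) \<and> (\<forall>x\<in>A - M. \<alpha> x > 0)))))"
proof -
  define d where "d = CARD('n)"
  have d: "1 \<le> d" using assms(2) by (simp add: d_def)
  obtain s where s: "s > 0" and dv: "\<forall>i\<in>{1..d+1}. \<forall>j\<in>{1..d+1}. i \<noteq> j \<longrightarrow> dist (v i) (v j) = s"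
    using assms(3) unfolding regular_simplex_def d_def by blast
  obtain \<epsilon>0 \<phi> where "0 < \<epsilon>0" and \<phi>_affine: "\<And>h. preserves_affine_combinations (\<phi> h)"
    and \<phi>_sum: "\<And>x. (\<Sum>h\<in>{1..d+1}. \<phi> h x) = 1"
    and \<phi>_near: "\<And>\<epsilon>. 0 < \<epsilon> \<Longrightarrow> \<epsilon> < \<epsilon>0 \<Longrightarrow> \<exists>c::real. 0 \<le> c \<and> 8 * c * real d \<le> 1 \<and> c \<le> 1/4 \<and>
      (\<forall>h\<in>{1..d+1}. \<forall>k\<in>{1..d+1}. \<forall>x. dist x (v k) \<le> \<epsilon> \<longrightarrow> \<bar>\<phi> h x - (if h = k then 1 else 0)\<bar> \<le> c)"
    using regular_simplex_coordinates_near_vertices[OF d s dv] by metis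
  show ?thesis unfolding d_def[symmetric] Let_def
  proof (intro exI[of _ \<epsilon>0] conjI[OF \<open>0 < \<epsilon>0\<close>] allI impI, elim conjE, intro conjI)
    fix \<epsilon> :: real and U :: "nat \<Rightarrow> (real ^ 'n) set"
    assume "0 < \<epsilon>" "\<epsilon> < \<epsilon>0" and U: "\<forall>h\<in>{1..d+1}. finite (U h) \<and> U h \<subseteq> cball (v h) \<epsilon>"
      and U_card: "card (U 1) = r" "\<forall>h\<in>{2..d+1}. card (U h) = r - 1"
    obtain c :: real where c: "0 \<le> c" "8 * c * d \<le> 1" "c \<le> 1/4" and near_ball:
        "\<forall>h\<in>{1..d+1}. \<forall>k\<in>{1..d+1}. \<forall>x. dist x (v k) \<le> \<epsilon> \<longrightarrow> \<bar>\<phi> h x - (if h = k then 1 else 0)\<bar> \<le> c"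
      using \<phi>_near[OF \<open>0 < \<epsilon>\<close> \<open>\<epsilon> < \<epsilon>0\<close>] by blast
    have near: "\<And>h k x. h \<in> {1..d+1} \<Longrightarrow> k \<in> {1..d+1} \<Longrightarrow> x \<in> U k \<Longrightarrow>
        \<bar>\<phi> h x - (if h = k then 1 else 0)\<bar> \<le> c"
      using near_ball U by (fastforce simp: dist_commute)
    have U_fin: "\<And>h. h \<in> {1..d+1} \<Longrightarrow> finite (U h)" using U by blast
    show "convex hull U 1 \<inter> convex hull ((\<Union>h\<in>{1..d+1}. U h) - U 1) = {}"
      using near_first_vertex_convex_hulls_disjoint[where d = d and U = U, OF \<phi>_affine near _ U_fin] c(3)
      by simp
    show "card (U 1) = r" by (fact U_card(1))
    show "\<not> (\<exists>P. proper_partition r (\<Union>h\<in>{1..d+1}. U h) P \<and> (\<exists>z \<alpha>.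
        (\<forall>j\<in>{1..r}. z = (\<Sum>x\<in>P j. \<alpha> x *\<^sub>R x) \<and> (\<Sum>x\<in>P j. \<alpha> x) = 1) \<and>
        (\<forall>x\<in>U 1. \<alpha> x < 0) \<and> (\<forall>x\<in>(\<Union>h\<in>{1..d+1}. U h) - U 1. 0 < \<alpha> x)))"
      by (rule proper_partition_no_sign_pattern_solution[OF \<phi>_affine \<phi>_sum near c])
        (use U_fin U_card assms(1) in auto)
  qed
qed

end
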